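(* Let $\mathscr{S}$ be a relaxed scenario without HGT-edges. Then $G_{=}(\mathscr{S})$ is a cograph.
   Context: All trees are planted phylogenetic trees: a tree $T$ has a distinguished vertex $0_T$ of degree $1$ whose unique neighbor $\rho_T$ is the root, and every vertex other than $0_T$ and the leaves $L(T)$ has at least two children. For $x,y\in V(T)$ write $y\preceq_T x$ if $x$ lies on the path from $0_T$ to $y$; edges are written $uv$ with $v\prec_T u$. The order extends to $V(T)\cup E(T)$: for a vertex $x$ and an edge $e=uv$, $x\preceq_T e$ iff $x\preceq_T v$, and $e\preceq_T x$ iff $u\preceq_T x$; for edges, $uv\preceq_T ab$ iff $v\preceq_T b$. Two elements are comparable if one is $\preceq$ the other. $\mathrm{lca}_T$ denotes the last common ancestor. A time map for $T$ is $\tau_T\colon V(T)\to\mathbb{R}$ with $\tau_T(x)<\tau_T(y)$ whenever $x\prec_T y$. A relaxed scenario $\mathscr{S}=(T,S,\sigma,\mu,\tau_T,\tau_S)$ consists of a gene tree $T$ with time map $\tau_T$, a species tree $S$ with time map $\tau_S$, a map $\sigma\colon L(T)\to M$ with $M\subseteq L(S)$, and a map $\mu\colon V(T)\to V(S)\cup E(S)$ such that (S0) $\mu(x)=0_S$ iff $x=0_T$; (S1) $\mu(x)\in L(S)$ iff $x\in L(T)$, in which case $\mu(x)=\sigma(x)$; (S2) if $\mu(x)\in V(S)$ then $\tau_S(\mu(x))=\tau_T(x)$; (S3) if $\mu(x)=uv\in E(S)$ then $\tau_S(v)<\tau_T(x)<\tau_S(u)$. The EDT graph $G_{=}(\mathscr{S})$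 has vertex set $L(T)$ and an edge $xy$ ($x\ne y$) iff $\tau_T(\mathrm{lca}_T(x,y))=\tau_S(\mathrm{lca}_S(\sigma(x),\sigma(y)))$. An edge $uv\in E(T)$ is an HGT-edge if $\mu(u)$ and $\mu(v)$ are incomparable in $S$. A cograph is a graph with no induced path on four vertices. *)

theory Defs
  imports Complex_Main
begin

record 'a ptree =
  verts :: "'a set"
  arcs  :: "('a \<times> 'a) set"
  plant :: "'a"

definition children :: "'a ptree \<Rightarrow> 'a \<Rightarrow> 'a set" where
  "children T u = {v. (u, v) \<in> arcs T}"

definition leaves :: "'a ptree \<Rightarrow> 'a set" where
  "leaves T = {v \<in> verts T. children T v = {}}"

definition prec_eq :: "'a ptree \<Rightarrow> 'a \<Rightarrow> 'a \<Rightarrow> bool" where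
  "prec_eq T y x \<longleftrightarrow> x \<in> verts T \<and> y \<in> verts T \<and> (x, y) \<in> (arcs T)\<^sup>*"

definition prec :: "'a ptree \<Rightarrow> 'a \<Rightarrow> 'a \<Rightarrow> bool" where
  "prec T y x \<longleftrightarrow> prec_eq T y x \<and> y \<noteq> x"

definition planted_phylo_tree :: "'a ptree \<Rightarrow> bool" where
  "planted_phylo_tree T \<longleftrightarrow>
     finite (verts T) \<and> plant T \<in> verts T \<and> arcs T \<subseteq> verts T \<times> verts T \<and>
     (\<forall>v. (v, plant T) \<notin> arcs T) \<and>
     (\<forall>v \<in> verts T. v \<noteq> plant T \<longrightarrow> (\<exists>!u. (u, v) \<in> arcs T)) \<and>
     (\<forall>v \<in> verts T. (plant T, v) \<in> (arcs T)\<^sup>*) \<and>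
     card (children T (plant T)) = 1 \<and>
     (\<forall>v \<in> verts T. v \<noteq> plant T \<and> v \<notin> leaves T \<longrightarrow> card (children T v) \<ge> 2)"

definition root :: "'a ptree \<Rightarrow> 'a" where
  "root T = (THE r. (plant T, r) \<in> arcs T)"

definition lca :: "'a ptree \<Rightarrow> 'a \<Rightarrow> 'a \<Rightarrow> 'a" where
  "lca T x y = (THE z. prec_eq T x z \<and> prec_eq T y z \<and>
                   (\<forall>w. prec_eq T x w \<and> prec_eq T y w \<longrightarrow> prec_eq T z w))"

text \<open>Elements of V(T) \<union> E(T): Inl v for a vertex, Inr (u,v) for an edge uv.\<close>
type_synonym 'a elem = "'a + ('a \<times> 'a)"

definition is_elem :: "'a ptree \<Rightarrow> 'a elem \<Rightarrow> bool" where
  "is_elem T a \<longleftrightarrow> (case a of Inl v \<Rightarrow> v \<in> verts T | Inr e \<Rightarrow> e \<in> arcs T)"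

fun elem_prec_eq :: "'a ptree \<Rightarrow> 'a elem \<Rightarrow> 'a elem \<Rightarrow> bool" where
  "elem_prec_eq T (Inl x) (Inl y) = prec_eq T x y"
| "elem_prec_eq T (Inl x) (Inr (u, v)) = ((u, v) \<in> arcs T \<and> prec_eq T x v)"
| "elem_prec_eq T (Inr (u, v)) (Inl x) = ((u, v) \<in> arcs T \<and> prec_eq T u x)"
| "elem_prec_eq T (Inr (u, v)) (Inr (a, b)) = ((u, v) \<in> arcs T \<and> (a, b) \<in> arcs T \<and> prec_eq T v b)"

definition comparable :: "'a ptree \<Rightarrow> 'a elem \<Rightarrow> 'a elem \<Rightarrow> bool" where
  "comparable T a b \<longleftrightarrow> elem_prec_eq T a b \<or> elem_prec_eq T b a"

definition time_map :: "'a ptree \<Rightarrow> ('a \<Rightarrow> real) \<Rightarrow> bool" where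
  "time_map T \<tau> \<longleftrightarrow> (\<forall>x y. prec T x y \<longrightarrow> \<tau> x < \<tau> y)"

definition relaxed_scenario ::
  "'g ptree \<Rightarrow> 's ptree \<Rightarrow> ('g \<Rightarrow> 's) \<Rightarrow> ('g \<Rightarrow> 's elem) \<Rightarrow> ('g \<Rightarrow> real) \<Rightarrow> ('s \<Rightarrow> real) \<Rightarrow> bool"
where
  "relaxed_scenario T S \<sigma> \<mu> \<tau>T \<tau>S \<longleftrightarrow>
     planted_phylo_tree T \<and> planted_phylo_tree S \<and> time_map T \<tau>T \<and> time_map S \<tau>S \<and>
     \<sigma> ` leaves T \<subseteq> leaves S \<and>
     (\<forall>x \<in> verts T. is_elem S (\<mu> x)) \<and>
     (\<forall>x \<in> verts T. \<mu> x = Inl (plant S) \<longleftrightarrow> x = plant T) \<and>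
     (\<forall>x \<in> verts T. \<mu> x \<in> Inl ` leaves S \<longleftrightarrow> x \<in> leaves T) \<and>
     (\<forall>x \<in> leaves T. \<mu> x = Inl (\<sigma> x)) \<and>
     (\<forall>x \<in> verts T. \<forall>w. \<mu> x = Inl w \<longrightarrow> \<tau>S w = \<tau>T x) \<and>
     (\<forall>x \<in> verts T. \<forall>u v. \<mu> x = Inr (u, v) \<longrightarrow> \<tau>S v < \<tau>T x \<and> \<tau>T x < \<tau>S u)"

definition HGT_edge ::
  "'g ptree \<Rightarrow> 's ptree \<Rightarrow> ('g \<Rightarrow> 's elem) \<Rightarrow> 'g \<times> 'g \<Rightarrow> bool" where
  "HGT_edge T S \<mu> e \<longleftrightarrow> e \<in> arcs T \<and> \<not> comparable S (\<mu> (fst e)) (\<mu> (snd e))"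

definition EDT_edge ::
  "'g ptree \<Rightarrow> 's ptree \<Rightarrow> ('g \<Rightarrow> 's) \<Rightarrow> ('g \<Rightarrow> real) \<Rightarrow> ('s \<Rightarrow> real) \<Rightarrow> 'g \<Rightarrow> 'g \<Rightarrow> bool" where
  "EDT_edge T S \<sigma> \<tau>T \<tau>S x y \<longleftrightarrow>
     x \<in> leaves T \<and> y \<in> leaves T \<and> x \<noteq> y \<and>
     \<tau>T (lca T x y) = \<tau>S (lca S (\<sigma> x) (\<sigma> y))"

definition cograph :: "'a set \<Rightarrow> ('a \<Rightarrow> 'a \<Rightarrow> bool) \<Rightarrow> bool" where
  "cograph V E \<longleftrightarrow> \<not> (\<exists>a\<in>V. \<exists>b\<in>V. \<exists>c\<in>V. \<exists>d\<in>V.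
      distinct [a, b, c, d] \<and> E a b \<and> E b c \<and> E c d \<and> \<not> E a c \<and> \<not> E b d \<and> \<not> E a d)"

end

theory Submission
  imports Defs
begin

text \<open>Write \<open>d\<^sub>T(x, y) = \<tau>\<^sub>T(lca\<^sub>T(x, y))\<close> and \<open>d\<^sub>S(x, y) = \<tau>\<^sub>S(lca\<^sub>S(\<sigma> x, \<sigma> y))\<close>
  for leaves \<open>x, y\<close>; then \<open>xy\<close> is an edge of \<open>G\<^sub>=\<close> iff \<open>d\<^sub>S(x, y) = d\<^sub>T(x, y)\<close>.
  Both functions satisfy the strong triangle inequality, because the ancestors of a vertex form
  a chain. Without HGT-edges the reconciliation map \<open>\<mu>\<close> is monotone from \<open>T\<close> into
  \<open>V(S) \<union> E(S)\<close>, so \<open>\<mu>(lca\<^sub>T(x, y))\<close> lies above \<open>lca\<^sub>S(\<sigma> x, \<sigma> y)\<close> and hence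
  \<open>d\<^sub>S \<le> d\<^sub>T\<close>. For two such functions the agreement graph has no induced \<open>P\<^sub>4\<close> \<open>a-b-c-d\<close>:
  in a triangle with two tight sides and one slack side the tight sides carry the same value,
  so all three edges of the path carry a common value \<open>m\<close> and \<open>d\<^sub>T \<le> m\<close> on the non-edges;
  the strong triangle inequality for \<open>d\<^sub>S\<close> on \<open>a, c, d\<close> then gives \<open>d\<^sub>S(a, d) \<ge> m\<close>,
  contradicting \<open>d\<^sub>S(a, d) < d\<^sub>T(a, d) \<le> m\<close>.\<close>

lemma arc_in_verts:
  "planted_phylo_tree T \<Longrightarrow> (u, v) \<in> arcs T \<Longrightarrow> u \<in> verts T \<and> v \<in> verts T"
  unfolding planted_phylo_tree_def by blast

lemma parent_unique:
  assumes "planted_phylo_tree T" "(u, v) \<in> arcs T" "(u', v) \<in> arcs T"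
  shows "u = u'"
proof -
  have "v \<in> verts T" "v \<noteq> plant T"
    using assms unfolding planted_phylo_tree_def by blast+
  then show ?thesis
    using assms unfolding planted_phylo_tree_def by blast
qed

lemma prec_eq_refl: "v \<in> verts T \<Longrightarrow> prec_eq T v v"
  unfolding prec_eq_def by simp

lemma prec_eq_trans: "prec_eq T x y \<Longrightarrow> prec_eq T y z \<Longrightarrow> prec_eq T x z"
  unfolding prec_eq_def by (meson rtrancl_trans)

lemma arc_prec_eq: "planted_phylo_tree T \<Longrightarrow> (u, v) \<in> arcs T \<Longrightarrow> prec_eq T v u"
  unfolding prec_eq_def using arc_in_verts by fastforce

lemma parent_prec_eq_if_prec:
  assumes T: "planted_phylo_tree T" and arc: "(u, v) \<in> arcs T"
    and "prec_eq T v w" "v \<noteq> w"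
  shows "prec_eq T u w"
proof -
  have "(w, v) \<in> (arcs T)\<^sup>+"
    using assms(3,4) unfolding prec_eq_def by (simp add: rtrancl_eq_or_trancl)
  then obtain u' where "(w, u') \<in> (arcs T)\<^sup>*" "(u', v) \<in> arcs T"
    by (meson tranclD2)
  with parent_unique[OF T arc] show ?thesis
    using assms(3) arc_in_verts[OF T arc] unfolding prec_eq_def by blast
qed

lemma ancestors_comparable:
  assumes T: "planted_phylo_tree T" and "prec_eq T y a" "prec_eq T y b"
  shows "prec_eq T a b \<or> prec_eq T b a"
proof -
  have "single_valued ((arcs T)\<inverse>)"
    using parent_unique[OF T] unfolding single_valued_def by blast
  moreover have "(y, a) \<in> ((arcs T)\<inverse>)\<^sup>*" "(y, b) \<in> ((arcs T)\<inverse>)\<^sup>*"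
    using assms(2,3) unfolding prec_eq_def by (simp_all add: rtrancl_converse)
  ultimately have "(a, b) \<in> ((arcs T)\<inverse>)\<^sup>* \<or> (b, a) \<in> ((arcs T)\<inverse>)\<^sup>*"
    by (rule single_valued_confluent)
  then show ?thesis
    using assms(2,3) unfolding prec_eq_def by (auto simp: rtrancl_converse)
qed

lemma time_map_mono: "time_map T \<tau> \<Longrightarrow> prec_eq T x y \<Longrightarrow> \<tau> x \<le> \<tau> y"
  unfolding time_map_def prec_def by (metis order.order_iff_strict)

lemma prec_eq_antisym: "time_map T \<tau> \<Longrightarrow> prec_eq T x y \<Longrightarrow> prec_eq T y x \<Longrightarrow> x = y"
  unfolding time_map_def prec_def by (metis order.asym)

text \<open>The time map provides both the antisymmetry of \<open>\<preceq>\<^sub>T\<close> and a way to pick the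
  lowest of the (finitely many, totally ordered) common ancestors.\<close>

lemma lca_exists_unique:
  assumes T: "planted_phylo_tree T" and \<tau>: "time_map T \<tau>"
    and "x \<in> verts T" "y \<in> verts T"
  shows "\<exists>!z. prec_eq T x z \<and> prec_eq T y z \<and>
               (\<forall>w. prec_eq T x w \<and> prec_eq T y w \<longrightarrow> prec_eq T z w)"
proof -
  define C where "C = {z. prec_eq T x z \<and> prec_eq T y z}"
  have "finite C"
    using T unfolding C_def planted_phylo_tree_def prec_eq_def
    by (auto intro: rev_finite_subset)
  moreover have "plant T \<in> C"
    using T assms(3,4) unfolding C_def planted_phylo_tree_def prec_eq_def by blast
  ultimately obtain z where "is_arg_min \<tau> (\<lambda>z. z \<in> C) z"
    using ex_is_arg_min_if_finite by blast
  then have zC: "z \<in> C" and z_min: "\<And>w. w \<in> C \<Longrightarrow> \<not> \<tau> w < \<tau> z"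
    unfolding is_arg_min_def by blast+
  have z_least: "prec_eq T z w" if "w \<in> C" for w
  proof -
    have "prec_eq T z w \<or> prec_eq T w z"
      using ancestors_comparable[OF T] zC that unfolding C_def by blast
    moreover have "\<not> prec T w z"
      using z_min[OF that] \<tau> unfolding time_map_def by blast
    ultimately show ?thesis
      using zC unfolding prec_def C_def prec_eq_def by blast
  qed
  show ?thesis
  proof
    show "prec_eq T x z \<and> prec_eq T y z \<and> (\<forall>w. prec_eq T x w \<and> prec_eq T y w \<longrightarrow> prec_eq T z w)"
      using zC z_least unfolding C_def by blast
  next
    fix z' assume "prec_eq T x z' \<and> prec_eq T y z' \<and>
                   (\<forall>w. prec_eq T x w \<and> prec_eq T y w \<longrightarrow> prec_eq T z' w)"
    then show "z' = z"
      using zC z_least prec_eq_antisym[OF \<tau>] unfolding C_def by blast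
  qed
qed

lemma
  assumes "planted_phylo_tree T" "time_map T \<tau>" "x \<in> verts T" "y \<in> verts T"
  shows prec_eq_lca1: "prec_eq T x (lca T x y)"
    and prec_eq_lca2: "prec_eq T y (lca T x y)"
    and lca_least: "prec_eq T x w \<Longrightarrow> prec_eq T y w \<Longrightarrow> prec_eq T (lca T x y) w"
  using theI'[OF lca_exists_unique[OF assms]] unfolding lca_def by blast+

lemma lca_commute: "lca T x y = lca T y x"
  unfolding lca_def by (simp add: conj_commute conj_left_commute)

definition ultrametric_on :: "'a set \<Rightarrow> ('a \<Rightarrow> 'a \<Rightarrow> real) \<Rightarrow> bool" where
  "ultrametric_on V f \<longleftrightarrow>
     (\<forall>x\<in>V. \<forall>y\<in>V. f x y = f y x) \<and>
     (\<forall>x\<in>V. \<forall>y\<in>V. \<forall>z\<in>V. f x z \<le> max (f x y) (f y z))"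

lemma ultrametric_on_subset: "ultrametric_on W f \<Longrightarrow> V \<subseteq> W \<Longrightarrow> ultrametric_on V f"
  unfolding ultrametric_on_def by blast

lemma ultrametric_on_comp:
  "ultrametric_on W f \<Longrightarrow> g ` V \<subseteq> W \<Longrightarrow> ultrametric_on V (\<lambda>x y. f (g x) (g y))"
  unfolding ultrametric_on_def by (simp add: image_subset_iff)

lemma time_lca_ultrametric:
  assumes T: "planted_phylo_tree T" and \<tau>: "time_map T \<tau>"
  shows "ultrametric_on (verts T) (\<lambda>x y. \<tau> (lca T x y))"
  unfolding ultrametric_on_def
proof (intro conjI ballI)
  fix x y z assume xyz: "x \<in> verts T" "y \<in> verts T" "z \<in> verts T"
  note lca = prec_eq_lca1[OF T \<tau>] prec_eq_lca2[OF T \<tau>] lca_least[OF T \<tau>]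
  have "prec_eq T (lca T x y) (lca T y z) \<or> prec_eq T (lca T y z) (lca T x y)"
    using ancestors_comparable[OF T] lca xyz by blast
  then have "prec_eq T (lca T x z) (lca T y z) \<or> prec_eq T (lca T x z) (lca T x y)"
    using lca xyz by (meson prec_eq_trans)
  then show "\<tau> (lca T x z) \<le> max (\<tau> (lca T x y)) (\<tau> (lca T y z))"
    using time_map_mono[OF \<tau>] by fastforce
qed (simp add: lca_commute)

lemma elem_prec_eq_refl: "planted_phylo_tree T \<Longrightarrow> is_elem T A \<Longrightarrow> elem_prec_eq T A A"
  by (cases A) (auto simp: is_elem_def prec_eq_refl dest: arc_in_verts)

lemma parents_prec_eq_if_children:
  assumes T: "planted_phylo_tree T" and arcs: "(u, v) \<in> arcs T" "(a, b) \<in> arcs T"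
    and "prec_eq T v b"
  shows "prec_eq T u a"
proof (cases "v = b")
  case True
  then have "(a, v) \<in> arcs T"
    using arcs(2) by simp
  then show ?thesis
    using parent_unique[OF T arcs(1)] arc_in_verts[OF T arcs(1)] by (simp add: prec_eq_refl)
next
  case False
  then show ?thesis
    using parent_prec_eq_if_prec[OF T arcs(1) \<open>prec_eq T v b\<close>] arc_prec_eq[OF T arcs(2)]
    by (blast intro: prec_eq_trans)
qed

lemma elem_prec_eq_trans:
  assumes T: "planted_phylo_tree T" and "elem_prec_eq T A B" "elem_prec_eq T B C"
  shows "elem_prec_eq T A C"
  using assms(2,3)
  by (cases A; cases B; cases C; auto)
    (meson arc_prec_eq[OF T] parents_prec_eq_if_children[OF T] prec_eq_trans)+

definition time_within :: "('a \<Rightarrow> real) \<Rightarrow> 'a elem \<Rightarrow> real \<Rightarrow> bool" where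
  "time_within \<tau> A t \<longleftrightarrow> (case A of Inl v \<Rightarrow> \<tau> v = t | Inr (u, v) \<Rightarrow> \<tau> v < t \<and> t < \<tau> u)"

lemma elem_prec_time_less:
  assumes T: "planted_phylo_tree T" and \<tau>: "time_map T \<tau>"
    and AB: "elem_prec_eq T A B" "A \<noteq> B"
    and times: "time_within \<tau> A s" "time_within \<tau> B t"
  shows "s < t"
proof -
  consider (vertices) x y where "A = Inl x" "B = Inl y"
    | (vertex_arc) x p q where "A = Inl x" "B = Inr (p, q)"
    | (arc_vertex) p q y where "A = Inr (p, q)" "B = Inl y"
    | (arcs) p q p' q' where "A = Inr (p, q)" "B = Inr (p', q')"
    by (cases A; cases B; auto)
  then show ?thesis
  proof cases
    case vertices
    then show ?thesis
      using AB times \<tau> unfolding time_map_def prec_def time_within_def by auto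
  next
    case vertex_arc
    then show ?thesis
      using AB times time_map_mono[OF \<tau>, of x q] unfolding time_within_def by auto
  next
    case arc_vertex
    then show ?thesis
      using AB times time_map_mono[OF \<tau>, of p y] unfolding time_within_def by auto
  next
    case arcs
    then have arcs_pq: "(p, q) \<in> arcs T" "(p', q') \<in> arcs T" and "prec_eq T q q'"
      using AB by auto
    moreover have "q \<noteq> q'"
      using parent_unique[OF T] arcs_pq AB arcs by blast
    ultimately have "prec_eq T p q'"
      using parent_prec_eq_if_prec[OF T] by blast
    then show ?thesis
      using arcs times time_map_mono[OF \<tau>, of p q'] unfolding time_within_def by auto
  qed
qed

lemma lca_below_elem:
  assumes "planted_phylo_tree T" "time_map T \<tau>" "x \<in> verts T" "y \<in> verts T"
    and "elem_prec_eq T (Inl x) A" "elem_prec_eq T (Inl y) A"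
  shows "elem_prec_eq T (Inl (lca T x y)) A"
  using assms(5,6) lca_least[OF assms(1-4)] by (cases A) auto

lemma time_le_if_below_elem:
  assumes "time_map T \<tau>" "elem_prec_eq T (Inl v) A" "time_within \<tau> A t"
  shows "\<tau> v \<le> t"
  using assms(2,3) time_map_mono[OF assms(1)] unfolding time_within_def
  by (cases A) force+

lemma relaxed_scenario_time_within:
  "relaxed_scenario T S \<sigma> \<mu> \<tau>T \<tau>S \<Longrightarrow> x \<in> verts T \<Longrightarrow> time_within \<tau>S (\<mu> x) (\<tau>T x)"
  unfolding relaxed_scenario_def time_within_def by (auto split: sum.split)

text \<open>Otherwise comparability leaves \<open>\<mu> u\<close> strictly below \<open>\<mu> v\<close>, and the time
  constraints would give \<open>\<tau>\<^sub>T u < \<tau>\<^sub>T v\<close> although \<open>u\<close> is the parent of \<open>v\<close>.\<close>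

lemma elem_prec_eq_image_arc:
  assumes rs: "relaxed_scenario T S \<sigma> \<mu> \<tau>T \<tau>S"
    and arc: "(u, v) \<in> arcs T" and not_HGT: "\<not> HGT_edge T S \<mu> (u, v)"
  shows "elem_prec_eq S (\<mu> v) (\<mu> u)"
proof (rule ccontr)
  assume not_below: "\<not> elem_prec_eq S (\<mu> v) (\<mu> u)"
  have T: "planted_phylo_tree T" and S: "planted_phylo_tree S"
    and \<tau>T: "time_map T \<tau>T" and \<tau>S: "time_map S \<tau>S"
    using rs unfolding relaxed_scenario_def by blast+
  have "comparable S (\<mu> u) (\<mu> v)"
    using not_HGT arc unfolding HGT_edge_def by simp
  then have above: "elem_prec_eq S (\<mu> u) (\<mu> v)" and "\<mu> u \<noteq> \<mu> v"
    using not_below unfolding comparable_def by auto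
  moreover have "u \<in> verts T" "v \<in> verts T"
    using arc_in_verts[OF T arc] by auto
  ultimately have "\<tau>T u < \<tau>T v"
    using elem_prec_time_less[OF S \<tau>S] relaxed_scenario_time_within[OF rs] by blast
  moreover have "prec T v u"
    using arc_prec_eq[OF T arc] \<open>\<mu> u \<noteq> \<mu> v\<close> unfolding prec_def by blast
  ultimately show False
    using \<tau>T unfolding time_map_def by fastforce
qed

lemma elem_prec_eq_image:
  assumes rs: "relaxed_scenario T S \<sigma> \<mu> \<tau>T \<tau>S"
    and no_HGT: "\<forall>e \<in> arcs T. \<not> HGT_edge T S \<mu> e"
    and "prec_eq T y x"
  shows "elem_prec_eq S (\<mu> y) (\<mu> x)"
proof -
  have S: "planted_phylo_tree S" and \<mu>: "\<forall>x \<in> verts T. is_elem S (\<mu> x)"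
    using rs unfolding relaxed_scenario_def by blast+
  have "(x, y) \<in> (arcs T)\<^sup>*" and x: "x \<in> verts T"
    using assms(3) unfolding prec_eq_def by auto
  then show ?thesis
  proof (induction rule: rtrancl_induct)
    case base
    then show ?case
      using elem_prec_eq_refl[OF S] \<mu> x by blast
  next
    case (step v w)
    then show ?case
      using elem_prec_eq_image_arc[OF rs] no_HGT elem_prec_eq_trans[OF S] by blast
  qed
qed

lemma time_lca_species_le:
  assumes rs: "relaxed_scenario T S \<sigma> \<mu> \<tau>T \<tau>S"
    and no_HGT: "\<forall>e \<in> arcs T. \<not> HGT_edge T S \<mu> e"
    and x: "x \<in> leaves T" and y: "y \<in> leaves T"
  shows "\<tau>S (lca S (\<sigma> x) (\<sigma> y)) \<le> \<tau>T (lca T x y)"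
proof -
  have T: "planted_phylo_tree T" and S: "planted_phylo_tree S"
    and \<tau>T: "time_map T \<tau>T" and \<tau>S: "time_map S \<tau>S"
    and \<sigma>: "\<sigma> ` leaves T \<subseteq> leaves S" and \<mu>_leaf: "\<forall>x \<in> leaves T. \<mu> x = Inl (\<sigma> x)"
    using rs unfolding relaxed_scenario_def by blast+
  have xy: "x \<in> verts T" "y \<in> verts T" and \<sigma>xy: "\<sigma> x \<in> verts S" "\<sigma> y \<in> verts S"
    using x y \<sigma> unfolding leaves_def by auto
  define z where "z = lca T x y"
  have z: "z \<in> verts T"
    using prec_eq_lca1[OF T \<tau>T xy] unfolding z_def prec_eq_def by blast
  have "elem_prec_eq S (Inl (\<sigma> x)) (\<mu> z)" "elem_prec_eq S (Inl (\<sigma> y)) (\<mu> z)"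
    using elem_prec_eq_image[OF rs no_HGT] prec_eq_lca1[OF T \<tau>T xy] prec_eq_lca2[OF T \<tau>T xy]
      \<mu>_leaf x y unfolding z_def by metis+
  then have "elem_prec_eq S (Inl (lca S (\<sigma> x) (\<sigma> y))) (\<mu> z)"
    by (rule lca_below_elem[OF S \<tau>S \<sigma>xy])
  then show ?thesis
    using time_le_if_below_elem[OF \<tau>S] relaxed_scenario_time_within[OF rs z]
    unfolding z_def by blast
qed

lemma ultrametric_tight_sides_equal:
  assumes d: "ultrametric_on V d" and D: "ultrametric_on V D"
    and V: "x \<in> V" "y \<in> V" "z \<in> V"
    and tight: "d x y = D x y" "d y z = D y z" and slack: "d x z < D x z"
  shows "D x y = D y z"
proof -
  have "D x y \<le> max (D x z) (D z y)" "D y z \<le> max (D y x) (D x z)"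
    "D x z \<le> max (D x y) (D y z)" "d x y \<le> max (d x z) (d z y)" "d y z \<le> max (d y x) (d x z)"
    using d D V unfolding ultrametric_on_def by blast+
  moreover have "D z y = D y z" "D y x = D x y" "d z y = d y z" "d y x = d x y"
    using d D V unfolding ultrametric_on_def by blast+
  ultimately show ?thesis
    using tight slack by (smt (verit))
qed

lemma agreement_graph_cograph:
  assumes d: "ultrametric_on V d" and D: "ultrametric_on V D"
    and le: "\<forall>x\<in>V. \<forall>y\<in>V. d x y \<le> D x y"
    and E: "\<forall>x\<in>V. \<forall>y\<in>V. x \<noteq> y \<longrightarrow> (E x y \<longleftrightarrow> d x y = D x y)"
  shows "cograph V E"
proof -
  have False
    if V: "w \<in> V" "x \<in> V" "y \<in> V" "z \<in> V" and "distinct [w, x, y, z]"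
      and "E w x" "E x y" "E y z" "\<not> E w y" "\<not> E x z" "\<not> E w z" for w x y z
  proof -
    have tight: "d w x = D w x" "d x y = D x y" "d y z = D y z"
      and slack: "d w y < D w y" "d x z < D x z" "d w z < D w z"
      using that le E by (auto simp: order.strict_iff_order)
    define m where "m = D w x"
    have "D x y = m"
      using ultrametric_tight_sides_equal[OF d D V(1-3) tight(1,2) slack(1)] unfolding m_def ..
    also have "D x y = D y z"
      using ultrametric_tight_sides_equal[OF d D V(2-4) tight(2,3) slack(2)] .
    finally have "D y z = m" .
    have "D w y \<le> max (D w x) (D x y)" "D w z \<le> max (D w y) (D y z)"
      "d y z \<le> max (d y w) (d w z)" "d y w = d w y"
      using d D V unfolding ultrametric_on_def by blast+
    then show False
      using \<open>D y z = m\<close> \<open>D x y = D y z\<close> tight slack unfolding m_def by (smt (verit))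
  qed
  then show ?thesis
    unfolding cograph_def by blast
qed

theorem lemma21:
  fixes T :: "'g ptree" and S :: "'s ptree"
    and \<sigma> :: "'g \<Rightarrow> 's" and \<mu> :: "'g \<Rightarrow> 's elem"
    and \<tau>T :: "'g \<Rightarrow> real" and \<tau>S :: "'s \<Rightarrow> real"
  assumes "relaxed_scenario T S \<sigma> \<mu> \<tau>T \<tau>S"
    and "\<forall>e \<in> arcs T. \<not> HGT_edge T S \<mu> e"
  shows "cograph (leaves T) (EDT_edge T S \<sigma> \<tau>T \<tau>S)"
proof -
  have T: "planted_phylo_tree T" and S: "planted_phylo_tree S"
    and \<tau>T: "time_map T \<tau>T" and \<tau>S: "time_map S \<tau>S"
    and \<sigma>: "\<sigma> ` leaves T \<subseteq> leaves S"
    using assms(1) unfolding relaxed_scenario_def by blast+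
  have "ultrametric_on (leaves T) (\<lambda>x y. \<tau>S (lca S (\<sigma> x) (\<sigma> y)))"
    by (rule ultrametric_on_comp[OF time_lca_ultrametric[OF S \<tau>S]])
      (use \<sigma> in \<open>auto simp: leaves_def\<close>)
  moreover have "ultrametric_on (leaves T) (\<lambda>x y. \<tau>T (lca T x y))"
    by (rule ultrametric_on_subset[OF time_lca_ultrametric[OF T \<tau>T]])
      (auto simp: leaves_def)
  moreover have "\<forall>x\<in>leaves T. \<forall>y\<in>leaves T. \<tau>S (lca S (\<sigma> x) (\<sigma> y)) \<le> \<tau>T (lca T x y)"
    using time_lca_species_le[OF assms] by blast
  ultimately show ?thesis
    by (rule agreement_graph_cograph) (auto simp: EDT_edge_def)
qed

end
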